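(* Consider the $k$-agent prophet game with random tie-breaking. For every $\ell\in\{1,\ldots,n\}$, let $$T^\ell=\frac{1}{k+\ell}\sum_{j=1}^{\ell}\mathbb{E}[y_j].$$ Then for every agent $i$, the single threshold strategy $T^\ell$ guarantees agent $i$ an expected utility of at least $T^\ell$; that is, for every strategy profile $S_{-i}$ of the other agents, $u_i(T^\ell,S_{-i})\ge T^\ell$.
   Context: Prophet game with competing agents: there are $n$ rewards $v_1,\ldots,v_n$, where $v_t$ is a non-negative real random variable drawn from a known distribution $F_t$ (with finite mean), independently across $t$. There are $k$ agents. At each time $t=1,\ldots,n$, the value $v_t$ is revealed to all agents, and every active agent (an agent who has not yet received a reward) decides whether to select $v_t$. If exactly one agent selects $v_t$, it is assigned to that agent. If several agents select it, it is assigned to one of them by the tie-breaking rule. Under random tie-breaking, the reward goes to a uniformly random agent among those selecting it. An agent who receives a reward becomes inactive, and unselected rewards are lost forever. A strategy of an agent is a (possibly randomized) rule that, for each $t$, decides whether to select $v_t$ based on $t$, the realized value $v_t$, and the set of currently active agents. The utility $u_i(S)$ of agent $i$ under strategy profile $S=(S_1,\ldots,S_k)=(S_i,S_{-i})$ is her expected received reward (zero if she receives none). A strategy $S_i$ guarantees agent $i$ utility $\alpha$ if $u_i(S_i,S_{-i})\ge\alpha$ for every $S_{-i}$. The single threshold strategy $T$ selects $v_t$ if and only if the agent is still active and $v_t\ge T$. For $j=1,\ldots,n$, $y_j$ denotes the $j$-th largest value among $v_1,\ldots,v_n$. *)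

theory Defs
  imports "HOL-Probability.Probability"
begin

text \<open>Times are indexed 0,...,n-1 (time t of the paper is index t-1); agents are
0,...,k-1. A (behavioural) strategy profile is
sigma :: agent => time => value => active set => real, giving the probability that
the agent selects the current value; selection decisions of the agents are
independent at each step.\<close>

type_synonym profile = "nat \<Rightarrow> nat \<Rightarrow> real \<Rightarrow> nat set \<Rightarrow> real"

definition sel_prob :: "profile \<Rightarrow> nat \<Rightarrow> real \<Rightarrow> nat set \<Rightarrow> nat set \<Rightarrow> real" where
  "sel_prob \<sigma> t v A S =
     (\<Prod>j\<in>S. \<sigma> j t v A) * (\<Prod>j\<in>A - S. 1 - \<sigma> j t v A)"

text \<open>util F sigma i t r A: expected reward agent i receives from rounds t, ..., t+r-1
when the set of active agents at the start of round t is A (random tie-breaking).\<close>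

fun util :: "(nat \<Rightarrow> real measure) \<Rightarrow> profile \<Rightarrow> nat \<Rightarrow> nat \<Rightarrow> nat \<Rightarrow> nat set \<Rightarrow> real" where
  "util F \<sigma> i t 0 A = 0"
| "util F \<sigma> i t (Suc r) A =
     (\<integral>v. (\<Sum>S\<in>Pow A. sel_prob \<sigma> t v A S *
            (if S = {} then util F \<sigma> i (Suc t) r A
             else (\<Sum>w\<in>S. if w = i then v else util F \<sigma> i (Suc t) r (A - {w})) / real (card S)))
       \<partial>F t)"

definition utility :: "(nat \<Rightarrow> real measure) \<Rightarrow> nat \<Rightarrow> nat \<Rightarrow> profile \<Rightarrow> nat \<Rightarrow> real" where
  "utility F n k \<sigma> i = util F \<sigma> i 0 n {0..<k}"

definition threshold_strategy :: "real \<Rightarrow> nat \<Rightarrow> real \<Rightarrow> nat set \<Rightarrow> real" where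
  "threshold_strategy T = (\<lambda>t v A. if T \<le> v then 1 else 0)"

text \<open>y_j: the j-th largest of v_0,...,v_(n-1) (1 <= j <= n).\<close>

definition kth_largest :: "nat \<Rightarrow> (nat \<Rightarrow> real) \<Rightarrow> nat \<Rightarrow> real" where
  "kth_largest n v j = rev (sort (map v [0..<n])) ! (j - 1)"

definition expected_y :: "(nat \<Rightarrow> real measure) \<Rightarrow> nat \<Rightarrow> nat \<Rightarrow> real" where
  "expected_y F n j = (\<integral>v. kth_largest n v j \<partial>(PiM {..<n} F))"

definition thr :: "(nat \<Rightarrow> real measure) \<Rightarrow> nat \<Rightarrow> nat \<Rightarrow> nat \<Rightarrow> real" where
  "thr F n k l = (\<Sum>j=1..l. expected_y F n j) / real (k + l)"

end

theory Submission
  imports Defs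
begin

text \<open>Write \<open>a\<^sub>s = E[(v\<^sub>s - T)\<^sup>+]\<close>. Against any behaviour of the others, an agent
playing threshold \<open>T\<close> with \<open>r\<close> rounds to go receives at least
\<open>min T ((\<Sum>a\<^sub>s) / k)\<close>, by backward induction over the rounds: if she selects
\<open>v \<ge> T\<close> she wins it with probability at least \<open>1/k\<close>, and a competitor who wins
instead leaves her in a game with fewer agents. On the other hand
\<open>\<Sum>\<^sub>j\<^sub>\<le>\<^sub>\<ell> y\<^sub>j \<le> \<Sum>\<^sub>s (v\<^sub>s - T)\<^sup>+ + \<ell> T\<close> pointwise, so for \<open>T = T\<^sup>\<ell>\<close> taking
expectations gives \<open>k T \<le> \<Sum>\<^sub>s a\<^sub>s\<close>, and the minimum is \<open>T\<close>.\<close>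

lemma sum_sel_prob_Pow:
  assumes "finite A"
  shows "(\<Sum>S\<in>Pow A. sel_prob \<sigma> t v A S) = 1"
proof -
  have "(\<Sum>S\<in>Pow A. sel_prob \<sigma> t v A S) = (\<Prod>j\<in>A. \<sigma> j t v A + (1 - \<sigma> j t v A))"
    unfolding sel_prob_def by (rule prod_add[OF assms, symmetric])
  then show ?thesis by simp
qed

lemma sel_prob_nonneg:
  assumes "\<And>j. 0 \<le> \<sigma> j t v A \<and> \<sigma> j t v A \<le> 1"
  shows "0 \<le> sel_prob \<sigma> t v A S"
  unfolding sel_prob_def using assms by (intro mult_nonneg_nonneg prod_nonneg) auto

lemma sel_prob_le_one:
  assumes "finite A" "S \<subseteq> A" "\<And>j. 0 \<le> \<sigma> j t v A \<and> \<sigma> j t v A \<le> 1"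
  shows "sel_prob \<sigma> t v A S \<le> 1"
proof -
  have "(\<Sum>S'\<in>{S}. sel_prob \<sigma> t v A S') \<le> (\<Sum>S'\<in>Pow A. sel_prob \<sigma> t v A S')"
    using assms sel_prob_nonneg[of \<sigma> t v A] by (intro sum_mono2) auto
  then show ?thesis by (simp add: sum_sel_prob_Pow[OF assms(1)])
qed

lemma sel_prob_eq_0_if_forced:
  assumes "finite A" "S \<subseteq> A" "j \<in> A" "\<sigma> j t v A = (if j \<in> S then 0 else 1)"
  shows "sel_prob \<sigma> t v A S = 0"
  using assms finite_subset[OF assms(2,1)] unfolding sel_prob_def
  by (cases "j \<in> S") (auto intro!: prod_zero)

text \<open>The reward of agent \<open>i\<close> when exactly the agents in \<open>S\<close> select \<open>v\<close>, where \<open>c B\<close>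
is her continuation value when the set of active agents becomes \<open>B\<close>.\<close>

definition selection_payoff :: "nat \<Rightarrow> real \<Rightarrow> nat set \<Rightarrow> (nat set \<Rightarrow> real) \<Rightarrow> nat set \<Rightarrow> real" where
  "selection_payoff i v A c S =
     (if S = {} then c A else (\<Sum>w\<in>S. if w = i then v else c (A - {w})) / real (card S))"

definition round_payoff :: "profile \<Rightarrow> nat \<Rightarrow> nat \<Rightarrow> real \<Rightarrow> nat set \<Rightarrow> (nat set \<Rightarrow> real) \<Rightarrow> real" where
  "round_payoff \<sigma> i t v A c = (\<Sum>S\<in>Pow A. sel_prob \<sigma> t v A S * selection_payoff i v A c S)"

lemma util_Suc_eq_integral_round_payoff:
  "util F \<sigma> i t (Suc r) A = (\<integral>v. round_payoff \<sigma> i t v A (util F \<sigma> i (Suc t) r) \<partial>F t)"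
  by (simp add: round_payoff_def selection_payoff_def)

lemma selection_payoff_ge_if_selected:
  assumes "finite A" "S \<subseteq> A" "i \<in> S" "card A \<le> k" "m \<le> T" "T \<le> v"
    and c: "\<And>B. i \<in> B \<Longrightarrow> B \<subseteq> A \<Longrightarrow> m \<le> c B"
  shows "m + (v - T) / real k \<le> selection_payoff i v A c S"
proof -
  have finS: "finite S" using assms(1,2) finite_subset by blast
  define s where "s = real (card S)"
  have s1: "1 \<le> s" using finS assms(3) by (auto simp: s_def Suc_le_eq card_gt_0_iff)
  have sk: "s \<le> real k" using card_mono[OF assms(1,2)] assms(4) by (simp add: s_def)
  have "(s - 1) * m = (\<Sum>w\<in>S - {i}. m)"
    using finS assms(3) s1 by (simp add: s_def)
  also have "\<dots> \<le> (\<Sum>w\<in>S - {i}. c (A - {w}))"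
    using assms(2,3) by (intro sum_mono c) auto
  finally have others: "(s - 1) * m \<le> (\<Sum>w\<in>S - {i}. c (A - {w}))" .
  have "m + (v - T) / real k \<le> m + (v - m) / real k"
    using sk s1 assms(5) by (simp add: divide_right_mono)
  also have "\<dots> \<le> m + (v - m) / s"
    using s1 sk assms(5,6) by (intro add_left_mono divide_left_mono) auto
  also have "\<dots> = (v + (s - 1) * m) / s"
    using s1 by (simp add: field_simps)
  also have "\<dots> \<le> (v + (\<Sum>w\<in>S - {i}. c (A - {w}))) / s"
    using s1 others by (intro divide_right_mono) auto
  also have "\<dots> = selection_payoff i v A c S"
    using sum.remove[OF finS assms(3), of "\<lambda>w. if w = i then v else c (A - {w})"] assms(3)
    by (auto simp: selection_payoff_def s_def)
  finally show ?thesis .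
qed

lemma selection_payoff_ge_if_passing:
  assumes "finite A" "S \<subseteq> A" "i \<in> A" "i \<notin> S"
    and c: "\<And>B. i \<in> B \<Longrightarrow> B \<subseteq> A \<Longrightarrow> m \<le> c B"
  shows "m \<le> selection_payoff i v A c S"
proof (cases "S = {}")
  case True
  then show ?thesis using c assms(3) by (simp add: selection_payoff_def)
next
  case False
  have finS: "finite S" using assms(1,2) finite_subset by blast
  have "real (card S) * m = (\<Sum>w\<in>S. m)" by simp
  also have "\<dots> \<le> (\<Sum>w\<in>S. if w = i then v else c (A - {w}))"
    using assms(2-4) by (intro sum_mono) (auto intro: c)
  finally show ?thesis
    using False finS by (simp add: selection_payoff_def le_divide_eq mult.commute)
qed

lemma round_payoff_ge:
  assumes "finite A" "i \<in> A" "card A \<le> k" "m \<le> T"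
    and c: "\<And>B. i \<in> B \<Longrightarrow> B \<subseteq> A \<Longrightarrow> m \<le> c B"
    and \<sigma>: "\<And>j. 0 \<le> \<sigma> j t v A \<and> \<sigma> j t v A \<le> 1"
    and \<sigma>i: "\<sigma> i t v A = (if T \<le> v then 1 else 0)"
  shows "m + max (v - T) 0 / real k \<le> round_payoff \<sigma> i t v A c"
proof -
  let ?g = "m + max (v - T) 0 / real k"
  have "?g = (\<Sum>S\<in>Pow A. sel_prob \<sigma> t v A S * ?g)"
    by (simp add: sum_distrib_right[symmetric] sum_sel_prob_Pow[OF assms(1)])
  also have "\<dots> \<le> round_payoff \<sigma> i t v A c"
    unfolding round_payoff_def
  proof (rule sum_mono)
    fix S assume "S \<in> Pow A"
    then have SA: "S \<subseteq> A" by simp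
    consider "sel_prob \<sigma> t v A S = 0" | "T \<le> v" "i \<in> S" | "v < T" "i \<notin> S"
      using sel_prob_eq_0_if_forced[OF assms(1) SA assms(2), of \<sigma> t v] \<sigma>i by fastforce
    then have "?g \<le> selection_payoff i v A c S \<or> sel_prob \<sigma> t v A S = 0"
    proof cases
      case 2
      then show ?thesis
        using selection_payoff_ge_if_selected[OF assms(1) SA _ assms(3,4) _ c] by auto
    next
      case 3
      then show ?thesis
        using selection_payoff_ge_if_passing[OF assms(1) SA assms(2) _ c] by auto
    qed simp
    then show "sel_prob \<sigma> t v A S * ?g \<le> sel_prob \<sigma> t v A S * selection_payoff i v A c S"
      using sel_prob_nonneg[of \<sigma> t v A S] \<sigma> by (auto intro: mult_left_mono)
  qed
  finally show ?thesis .
qed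

lemma integrable_round_payoff:
  assumes "finite A" "prob_space M" "integrable M (\<lambda>v. v)"
    and meas: "\<And>j. (\<lambda>v. \<sigma> j t v A) \<in> borel_measurable M"
    and \<sigma>: "\<And>j v. 0 \<le> \<sigma> j t v A \<and> \<sigma> j t v A \<le> 1"
  shows "integrable M (\<lambda>v. round_payoff \<sigma> i t v A c)"
  unfolding round_payoff_def
proof (rule Bochner_Integration.integrable_sum)
  interpret prob_space M by fact
  fix S assume "S \<in> Pow A"
  then have SA: "S \<subseteq> A" by simp
  have "integrable M (\<lambda>v. if w = i then v else c (A - {w}))" for w
    using assms(3) by (cases "w = i") simp_all
  then have payoff: "integrable M (\<lambda>v. selection_payoff i v A c S)"
    unfolding selection_payoff_def by (cases "S = {}") auto
  have "(\<lambda>v. sel_prob \<sigma> t v A S) \<in> borel_measurable M"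
    unfolding sel_prob_def using meas by measurable
  moreover have "0 \<le> sel_prob \<sigma> t v A S \<and> sel_prob \<sigma> t v A S \<le> 1" for v
    using sel_prob_nonneg[of \<sigma> t v A S] sel_prob_le_one[OF assms(1) SA, of \<sigma> t v] \<sigma> by blast
  ultimately show "integrable M (\<lambda>v. sel_prob \<sigma> t v A S * selection_payoff i v A c S)"
    using payoff by (intro Bochner_Integration.integrable_bound[OF payoff])
      (auto simp: abs_mult mult_left_le_one_le)
qed

lemma threshold_strategy_bounds:
  "0 \<le> threshold_strategy T t v A \<and> threshold_strategy T t v A \<le> 1"
  by (simp add: threshold_strategy_def)

lemma borel_measurable_threshold_strategy:
  "(\<lambda>v. threshold_strategy T t v A) \<in> borel_measurable borel"
  unfolding threshold_strategy_def by measurable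

lemma util_threshold_ge_min:
  fixes F :: "nat \<Rightarrow> real measure" and \<sigma> :: profile and T :: real
  assumes prob: "\<forall>t<n. prob_space (F t)"
    and sets: "\<forall>t<n. sets (F t) = sets borel"
    and int: "\<forall>t<n. integrable (F t) (\<lambda>v. v)"
    and \<sigma>: "\<And>j t v A. 0 \<le> \<sigma> j t v A \<and> \<sigma> j t v A \<le> 1"
    and meas: "\<And>j t A. (\<lambda>v. \<sigma> j t v A) \<in> borel_measurable borel"
    and \<sigma>i: "\<sigma> i = threshold_strategy T"
  shows "t + r \<le> n \<Longrightarrow> finite A \<Longrightarrow> i \<in> A \<Longrightarrow> card A \<le> k \<Longrightarrow>
    min T ((\<Sum>s\<in>{t..<t+r}. \<integral>v. max (v - T) 0 \<partial>F s) / real k) \<le> util F \<sigma> i t r A"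
proof (induction r arbitrary: t A)
  case 0
  then show ?case by simp
next
  case (Suc r)
  define a where "a = (\<integral>v. max (v - T) 0 \<partial>F t)"
  define R where "R = (\<Sum>s\<in>{Suc t..<Suc t+r}. \<integral>v. max (v - T) 0 \<partial>F s)"
  define m where "m = min T (R / real k)"
  let ?c = "util F \<sigma> i (Suc t) r"
  have "t < n" using Suc.prems by simp
  then interpret prob_space "F t" using prob by simp
  have int_t: "integrable (F t) (\<lambda>v. v)" using int \<open>t < n\<close> by simp
  have c: "m \<le> ?c B" if "i \<in> B" "B \<subseteq> A" for B
    unfolding m_def R_def using Suc.prems that finite_subset card_mono[of A B]
    by (intro Suc.IH) auto
  have pointwise: "m + max (v - T) 0 / real k \<le> round_payoff \<sigma> i t v A ?c" for v
    using Suc.prems \<sigma> \<sigma>i by (intro round_payoff_ge c) (auto simp: m_def threshold_strategy_def)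
  have "(\<lambda>v. \<sigma> j t v A) \<in> borel_measurable (F t)" for j
    using meas sets \<open>t < n\<close> by (simp cong: measurable_cong_sets)
  then have "integrable (F t) (\<lambda>v. round_payoff \<sigma> i t v A ?c)"
    using Suc.prems(2) int_t \<sigma> by (intro integrable_round_payoff) unfold_locales
  moreover have "integrable (F t) (\<lambda>v. m + max (v - T) 0 / real k)"
    using int_t by auto
  ultimately have "(\<integral>v. m + max (v - T) 0 / real k \<partial>F t) \<le> util F \<sigma> i t (Suc r) A"
    unfolding util_Suc_eq_integral_round_payoff using pointwise by (intro integral_mono)
  moreover have "(\<integral>v. m + max (v - T) 0 / real k \<partial>F t) = m + a / real k"
    using int_t by (simp add: a_def prob_space)
  moreover have "min T ((a + R) / real k) \<le> m + a / real k"
  proof -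
    have "0 \<le> a / real k"
      unfolding a_def by simp
    then show ?thesis unfolding m_def add_divide_distrib by (simp add: min_def)
  qed
  moreover have "(\<Sum>s\<in>{t..<t+Suc r}. \<integral>v. max (v - T) 0 \<partial>F s) = a + R"
    unfolding a_def R_def by (simp add: sum.atLeast_Suc_lessThan)
  ultimately show ?case by simp
qed

lemma sum_kth_largest:
  fixes h :: "real \<Rightarrow> 'a::comm_monoid_add"
  shows "(\<Sum>j=1..n. h (kth_largest n v j)) = (\<Sum>s<n. h (v s))"
proof -
  define ys where "ys = rev (sort (map v [0..<n]))"
  have "length ys = n" by (simp add: ys_def)
  have "mset ys = mset (map v [0..<n])" by (simp add: ys_def)
  have "(\<Sum>j=1..n. h (kth_largest n v j)) = (\<Sum>j\<in>Suc ` {..<n}. h (ys ! (j - 1)))"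
    by (simp add: kth_largest_def ys_def image_Suc_lessThan)
  also have "\<dots> = (\<Sum>j<n. h (ys ! j))"
    by (subst sum.reindex) auto
  also have "\<dots> = sum_list (map h ys)"
    using \<open>length ys = n\<close> by (simp add: sum_list_sum_nth atLeast0LessThan)
  also have "\<dots> = sum_list (map h (map v [0..<n]))"
    using \<open>mset ys = mset (map v [0..<n])\<close> by (metis mset_map sum_mset_sum_list)
  also have "\<dots> = (\<Sum>s<n. h (v s))"
    by (simp flip: sum_set_upt_conv_sum_list_nat add: atLeast0LessThan)
  finally show ?thesis .
qed

lemma sum_kth_largest_le:
  assumes "J \<subseteq> {1..n}"
  shows "(\<Sum>j\<in>J. kth_largest n v j) \<le> (\<Sum>s<n. max (v s - T) 0) + real (card J) * T"
proof -
  have "(\<Sum>j\<in>J. kth_largest n v j - T) \<le> (\<Sum>j\<in>J. max (kth_largest n v j - T) 0)"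
    by (intro sum_mono) auto
  also have "\<dots> \<le> (\<Sum>j=1..n. max (kth_largest n v j - T) 0)"
    using assms by (intro sum_mono2) auto
  also have "\<dots> = (\<Sum>s<n. max (v s - T) 0)"
    by (rule sum_kth_largest)
  finally show ?thesis
    by (simp add: sum_subtractf)
qed

lemma
  fixes h :: "'b \<Rightarrow> real"
  assumes "\<And>i. i \<in> I \<Longrightarrow> prob_space (M i)" "s \<in> I" "h \<in> borel_measurable (M s)"
  shows integrable_PiM_component_iff:
      "integrable (PiM I M) (\<lambda>\<omega>. h (\<omega> s)) \<longleftrightarrow> integrable (M s) h"
    and integral_PiM_component: "(\<integral>\<omega>. h (\<omega> s) \<partial>PiM I M) = (\<integral>v. h v \<partial>M s)"
proof -
  have component: "(\<lambda>\<omega>. \<omega> s) \<in> measurable (PiM I M) (M s)"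
    using assms(2) by simp
  show "integrable (PiM I M) (\<lambda>\<omega>. h (\<omega> s)) \<longleftrightarrow> integrable (M s) h"
    using integrable_distr_eq[OF component assms(3)] distr_PiM_component[of I M s, OF assms(1,2)] by simp
  show "(\<integral>\<omega>. h (\<omega> s) \<partial>PiM I M) = (\<integral>v. h v \<partial>M s)"
    using integral_distr[OF component assms(3)] distr_PiM_component[of I M s, OF assms(1,2)] by simp
qed

text \<open>The \<open>expected_y F n j\<close> that are junk values of non-integrable \<open>y\<^sub>j\<close> are \<open>0\<close>; they are
dropped, which only helps since \<open>T \<ge> 0\<close>.\<close>

lemma sum_expected_y_le:
  fixes F :: "nat \<Rightarrow> real measure" and T :: real
  assumes prob: "\<forall>t<n. prob_space (F t)"
    and sets: "\<forall>t<n. sets (F t) = sets borel"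
    and int: "\<forall>t<n. integrable (F t) (\<lambda>v. v)"
    and "l \<le> n" "0 \<le> T"
  shows "(\<Sum>j=1..l. expected_y F n j) \<le> (\<Sum>s<n. \<integral>v. max (v - T) 0 \<partial>F s) + real l * T"
proof -
  define PM where "PM = PiM {..<n} F"
  define J where "J = {j\<in>{1..l}. integrable PM (\<lambda>v. kth_largest n v j)}"
  interpret PM: prob_space PM
    unfolding PM_def using prob by (intro prob_space_PiM) auto
  have JS: "J \<subseteq> {1..l}" unfolding J_def by auto
  have excess_meas: "(\<lambda>v. max (v - T) 0) \<in> borel_measurable (F s)" if "s < n" for s
    using sets that by (simp cong: measurable_cong_sets)
  have excess_int: "integrable PM (\<lambda>\<omega>. max (\<omega> s - T) 0)" if "s < n" for s
  proof -
    interpret prob_space "F s" using prob that by simp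
    have "integrable (F s) (\<lambda>v. max (v - T) 0)" using int that by auto
    then show ?thesis
      unfolding PM_def using prob that excess_meas[OF that]
      by (subst integrable_PiM_component_iff) auto
  qed
  have "(\<Sum>j=1..l. expected_y F n j) = (\<Sum>j\<in>J. expected_y F n j)"
    by (rule sum.mono_neutral_right)
      (auto simp: J_def expected_y_def PM_def not_integrable_integral_eq)
  also have "\<dots> = (\<integral>v. (\<Sum>j\<in>J. kth_largest n v j) \<partial>PM)"
    by (subst Bochner_Integration.integral_sum) (auto simp: J_def expected_y_def PM_def)
  also have "\<dots> \<le> (\<integral>v. (\<Sum>s<n. max (v s - T) 0) + real (card J) * T \<partial>PM)"
    using JS \<open>l \<le> n\<close>
    by (intro integral_mono sum_kth_largest_le)
      (auto simp: J_def excess_int intro!: Bochner_Integration.integrable_sum)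
  also have "\<dots> = (\<integral>v. (\<Sum>s<n. max (v s - T) 0) \<partial>PM) + real (card J) * T"
  proof -
    have "integrable PM (\<lambda>v. \<Sum>s<n. max (v s - T) 0)"
      using excess_int by (intro Bochner_Integration.integrable_sum) simp
    then show ?thesis by (simp add: PM.prob_space)
  qed
  also have "\<dots> = (\<Sum>s<n. \<integral>\<omega>. max (\<omega> s - T) 0 \<partial>PM) + real (card J) * T"
    using excess_int by (simp add: Bochner_Integration.integral_sum)
  also have "\<dots> = (\<Sum>s<n. \<integral>v. max (v - T) 0 \<partial>F s) + real (card J) * T"
    unfolding PM_def using prob
    by (intro arg_cong2[where f="(+)"] sum.cong integral_PiM_component excess_meas) auto
  also have "\<dots> \<le> (\<Sum>s<n. \<integral>v. max (v - T) 0 \<partial>F s) + real l * T"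
    using card_mono[OF _ JS] \<open>0 \<le> T\<close> by (simp add: mult_right_mono)
  finally show ?thesis .
qed

theorem theorem1:
  fixes F :: "nat \<Rightarrow> real measure" and n k i l :: nat and \<sigma> :: profile
  assumes "\<forall>t<n. prob_space (F t)"
    and "\<forall>t<n. sets (F t) = sets borel"
    and "\<forall>t<n. AE v in F t. 0 \<le> v"
    and "\<forall>t<n. integrable (F t) (\<lambda>v. v)"
    and "i < k"
    and "1 \<le> l" and "l \<le> n"
    and "\<forall>j t v A. 0 \<le> \<sigma> j t v A \<and> \<sigma> j t v A \<le> 1"
    and "\<forall>j t A. (\<lambda>v. \<sigma> j t v A) \<in> borel_measurable borel"
  shows "utility F n k (\<sigma>(i := threshold_strategy (thr F n k l))) i \<ge> thr F n k l"
proof -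
  define T where "T = thr F n k l"
  define R where "R = (\<Sum>s<n. \<integral>v. max (v - T) 0 \<partial>F s)"
  have "0 \<le> R" unfolding R_def by (simp add: sum_nonneg)
  have "real k * T \<le> R"
  proof (cases "0 \<le> T")
    case True
    have "T * real (k + l) \<le> R + real l * T"
      using sum_expected_y_le[OF assms(1,2,4,7) True] assms(6)
      by (simp add: T_def R_def thr_def)
    then show ?thesis by (simp add: algebra_simps)
  next
    case False
    then have "real k * T \<le> 0" by (simp add: mult_nonneg_nonpos)
    with \<open>0 \<le> R\<close> show ?thesis by linarith
  qed
  then have "T = min T (R / real k)"
    using assms(5) by (simp add: min_def le_divide_eq mult.commute)
  also have "\<dots> \<le> util F (\<sigma>(i := threshold_strategy T)) i 0 n {0..<k}"
  proof -
    let ?\<tau> = "\<sigma>(i := threshold_strategy T)"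
    have "0 \<le> ?\<tau> j t v A \<and> ?\<tau> j t v A \<le> 1" for j t v A
      using assms(8) threshold_strategy_bounds by simp
    moreover have "(\<lambda>v. ?\<tau> j t v A) \<in> borel_measurable borel" for j t A
      using assms(9) borel_measurable_threshold_strategy by (cases "j = i") simp_all
    ultimately show ?thesis
      using util_threshold_ge_min[OF assms(1,2,4), where t=0 and r=n and A="{0..<k}"] assms(5)
      by (simp add: R_def atLeast0LessThan)
  qed
  finally show ?thesis unfolding utility_def T_def .
qed

end
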